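(* Let $\mathfrak a_{1.3}$ be the Lie algebra of vector fields on $\mathbb R^3$ with coordinates $(z_1,z_2,w)$ spanned by \[ P^1=\partial_{z_1},\quad D^1=z_1\partial_{z_1}-w\partial_w,\quad K=z_1^2\partial_{z_1}+z_1z_2\partial_{z_2}+\big(z_1w+\tfrac16z_2^{3}\big)\partial_w, \] \[ D^2=z_2\partial_{z_2}+3w\partial_w,\quad P^2=\partial_{z_2},\quad H=z_1\partial_{z_2}+\tfrac12z_2^{2}\partial_w,\quad R(\alpha)=\alpha(z_1)z_2\partial_w,\quad Z(\sigma)=\sigma(z_1)\partial_w, \] where $\alpha$ and $\sigma$ run through the set of smooth functions of $z_1$. Then the radical (the maximal solvable ideal) $\mathfrak r$ of $\mathfrak a_{1.3}$ coincides with $\big\langle D^2,\,P^2,\,H,\,R(\alpha),\,Z(\sigma)\big\rangle$, the span of $D^2$, $P^2$, $H$ and all $R(\alpha)$, $Z(\sigma)$.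
   Context: $\mathfrak a_{1.3}$ is the maximal Lie invariance (pseudo)algebra of the partial differential equation $w_{122}+w_{22}w_{222}=0$ for $w=w(z_1,z_2)$, where subscripts $1,2$ denote differentiation with respect to $z_1,z_2$. The bracket is the Lie bracket of vector fields. *)

theory Defs
  imports "HOL-Analysis.Analysis"
begin

text \<open>Vector fields on R^3 with coordinates (z1, z2, w), as maps R^3 -> R^3
  (component i = coefficient of the i-th coordinate vector field).\<close>
type_synonym vf = "real \<times> real \<times> real \<Rightarrow> real \<times> real \<times> real"

definition smooth_fun :: "(real \<Rightarrow> real) \<Rightarrow> bool" where
  "smooth_fun f \<longleftrightarrow> (\<forall>k x. ((deriv ^^ k) f) differentiable (at x))"

text \<open>Lie bracket of vector fields: [X,Y] = DY . X - DX . Y, i.e. [X,Y] = XY - YX as derivations.\<close>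
definition vf_bracket :: "vf \<Rightarrow> vf \<Rightarrow> vf" where
  "vf_bracket X Y = (\<lambda>p. frechet_derivative Y (at p) (X p) - frechet_derivative X (at p) (Y p))"

definition vf_span :: "vf set \<Rightarrow> vf set" where
  "vf_span S = {f. \<exists>F c. finite F \<and> F \<subseteq> S \<and> f = (\<lambda>p. \<Sum>v\<in>F. c v *\<^sub>R v p)}"

definition vf_subspace :: "vf set \<Rightarrow> bool" where
  "vf_subspace I \<longleftrightarrow> (\<lambda>p. 0) \<in> I \<and> (\<forall>x\<in>I. \<forall>y\<in>I. (\<lambda>p. x p + y p) \<in> I)
     \<and> (\<forall>c. \<forall>x\<in>I. (\<lambda>p. c *\<^sub>R x p) \<in> I)"

definition lie_ideal :: "vf set \<Rightarrow> vf set \<Rightarrow> bool" where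
  "lie_ideal A I \<longleftrightarrow> I \<subseteq> A \<and> vf_subspace I \<and> (\<forall>x\<in>A. \<forall>y\<in>I. vf_bracket x y \<in> I)"

fun derived :: "vf set \<Rightarrow> nat \<Rightarrow> vf set" where
  "derived I 0 = I"
| "derived I (Suc k) = vf_span {vf_bracket x y | x y. x \<in> derived I k \<and> y \<in> derived I k}"

definition solvable :: "vf set \<Rightarrow> bool" where
  "solvable I \<longleftrightarrow> (\<exists>k. derived I k = {\<lambda>p. 0})"

definition solvable_ideal :: "vf set \<Rightarrow> vf set \<Rightarrow> bool" where
  "solvable_ideal A I \<longleftrightarrow> lie_ideal A I \<and> solvable I"

definition is_radical :: "vf set \<Rightarrow> vf set \<Rightarrow> bool" where
  "is_radical A r \<longleftrightarrow> solvable_ideal A r \<and> (\<forall>J. solvable_ideal A J \<longrightarrow> J \<subseteq> r)"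

definition P1 :: vf where "P1 = (\<lambda>(z1, z2, w). (1, 0, 0))"
definition D1 :: vf where "D1 = (\<lambda>(z1, z2, w). (z1, 0, - w))"
definition K :: vf where "K = (\<lambda>(z1, z2, w). (z1^2, z1 * z2, z1 * w + z2^3 / 6))"
definition D2 :: vf where "D2 = (\<lambda>(z1, z2, w). (0, z2, 3 * w))"
definition P2 :: vf where "P2 = (\<lambda>(z1, z2, w). (0, 1, 0))"
definition H :: vf where "H = (\<lambda>(z1, z2, w). (0, z1, z2^2 / 2))"
definition R :: "(real \<Rightarrow> real) \<Rightarrow> vf" where "R \<alpha> = (\<lambda>(z1, z2, w). (0, 0, \<alpha> z1 * z2))"
definition Z :: "(real \<Rightarrow> real) \<Rightarrow> vf" where "Z \<sigma> = (\<lambda>(z1, z2, w). (0, 0, \<sigma> z1))"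

definition a13 :: "vf set" where
  "a13 = vf_span ({P1, D1, K, D2, P2, H} \<union> {R \<alpha> | \<alpha>. smooth_fun \<alpha>} \<union> {Z \<sigma> | \<sigma>. smooth_fun \<sigma>})"

definition r13 :: "vf set" where
  "r13 = vf_span ({D2, P2, H} \<union> {R \<alpha> | \<alpha>. smooth_fun \<alpha>} \<union> {Z \<sigma> | \<sigma>. smooth_fun \<sigma>})"

end

theory Submission
  imports Defs
begin

text \<open>Every element of a13 is a combination a P1 + b D1 + c K + d D2 + e P2 + h H + R(alpha) + Z(sigma),
  and computing brackets shows that the (a, b, c)-coordinates of a bracket depend only on the
  (a, b, c)-coordinates of its arguments, through the bracket of the copy of sl2 spanned by P1, D1, K.
  Hence r13 = {a = b = c = 0} is an ideal; its derived series passes through {a = b = c = d = 0} and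
  {a = b = c = d = e = h = 0}, where all brackets vanish, so it is solvable.
  Conversely, if an ideal J contains an element with (a, b, c) \<noteq> 0, bracketing with P1 and K yields
  elements of J whose sl2-coordinates are those of P1, D1 and K. Since sl2 is perfect, such elements
  persist in every term of the derived series of J, so J is not solvable.\<close>

lemma smooth_fun_coinduct:
  assumes "P f"
    and differentiable: "\<And>g x. P g \<Longrightarrow> g differentiable at x"
    and deriv: "\<And>g. P g \<Longrightarrow> P (deriv g)"
  shows "smooth_fun f"
proof -
  have "\<forall>g. P g \<longrightarrow> (deriv ^^ k) g differentiable at x" for k x
  proof (induction k)
    case 0
    show ?case using differentiable by simp
  next
    case (Suc k)
    then show ?case
      using deriv by (simp add: funpow_Suc_right del: funpow.simps)
  qed
  then show ?thesis
    using \<open>P f\<close> unfolding smooth_fun_def by blast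
qed

lemma smooth_fun_differentiable: "smooth_fun f \<Longrightarrow> f differentiable at x"
  unfolding smooth_fun_def by (metis funpow_0)

lemma smooth_fun_deriv: "smooth_fun f \<Longrightarrow> smooth_fun (deriv f)"
  unfolding smooth_fun_def by (metis funpow_Suc_right comp_apply)

lemma smooth_fun_DERIV: "smooth_fun f \<Longrightarrow> (f has_real_derivative deriv f x) (at x)"
  using smooth_fun_differentiable DERIV_deriv_iff_real_differentiable by blast

lemma smooth_fun_const: "smooth_fun (\<lambda>x. k)"
  by (rule smooth_fun_coinduct[where P = "\<lambda>g. \<exists>k. g = (\<lambda>x. k)"]) auto

lemma smooth_fun_add:
  assumes "smooth_fun f" "smooth_fun g"
  shows "smooth_fun (\<lambda>x. f x + g x)"
proof (rule smooth_fun_coinduct[where P = "\<lambda>u. \<exists>f g. smooth_fun f \<and> smooth_fun g \<and> u = (\<lambda>x. f x + g x)"])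
  fix u
  assume "\<exists>f g. smooth_fun f \<and> smooth_fun g \<and> u = (\<lambda>x. f x + g x)"
  then obtain f g where fg: "smooth_fun f" "smooth_fun g" and u: "u = (\<lambda>x. f x + g x)"
    by blast
  show "u differentiable at x" for x
    using fg unfolding u by (intro derivative_intros smooth_fun_differentiable)
  have "deriv u = (\<lambda>x. deriv f x + deriv g x)"
    using fg unfolding u by (auto intro!: DERIV_imp_deriv derivative_eq_intros smooth_fun_DERIV)
  then show "\<exists>f g. smooth_fun f \<and> smooth_fun g \<and> deriv u = (\<lambda>x. f x + g x)"
    using fg smooth_fun_deriv by blast
qed (use assms in blast)

lemma smooth_fun_cmult:
  assumes "smooth_fun f"
  shows "smooth_fun (\<lambda>x. k * f x)"
proof (rule smooth_fun_coinduct[where P = "\<lambda>u. \<exists>f. smooth_fun f \<and> u = (\<lambda>x. k * f x)"])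
  fix u
  assume "\<exists>f. smooth_fun f \<and> u = (\<lambda>x. k * f x)"
  then obtain f where f: "smooth_fun f" and u: "u = (\<lambda>x. k * f x)"
    by blast
  show "u differentiable at x" for x
    using f unfolding u by (intro derivative_intros smooth_fun_differentiable)
  have "deriv u = (\<lambda>x. k * deriv f x)"
    using f unfolding u by (auto intro!: DERIV_imp_deriv derivative_eq_intros smooth_fun_DERIV)
  then show "\<exists>f. smooth_fun f \<and> deriv u = (\<lambda>x. k * f x)"
    using f smooth_fun_deriv by blast
qed (use assms in blast)

lemma smooth_fun_diff: "smooth_fun f \<Longrightarrow> smooth_fun g \<Longrightarrow> smooth_fun (\<lambda>x. f x - g x)"
  using smooth_fun_add[of f "\<lambda>x. (-1) * g x"] smooth_fun_cmult[of g "-1"] by simp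

lemma smooth_fun_add_mult_ident:
  assumes "smooth_fun f" "smooth_fun g"
  shows "smooth_fun (\<lambda>x. f x + x * g x)"
proof (rule smooth_fun_coinduct[where P = "\<lambda>u. \<exists>f g. smooth_fun f \<and> smooth_fun g \<and> u = (\<lambda>x. f x + x * g x)"])
  fix u
  assume "\<exists>f g. smooth_fun f \<and> smooth_fun g \<and> u = (\<lambda>x. f x + x * g x)"
  then obtain f g where fg: "smooth_fun f" "smooth_fun g" and u: "u = (\<lambda>x. f x + x * g x)"
    by blast
  show "u differentiable at x" for x
    using fg unfolding u by (intro derivative_intros smooth_fun_differentiable)
  have "deriv u = (\<lambda>x. (deriv f x + g x) + x * deriv g x)"
    using fg unfolding u
    by (auto intro!: DERIV_imp_deriv derivative_eq_intros smooth_fun_DERIV simp: algebra_simps)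
  moreover have "smooth_fun (\<lambda>x. deriv f x + g x)"
    using fg by (intro smooth_fun_add smooth_fun_deriv)
  ultimately show "\<exists>f g. smooth_fun f \<and> smooth_fun g \<and> deriv u = (\<lambda>x. f x + x * g x)"
    using fg smooth_fun_deriv by blast
qed (use assms in blast)

lemma smooth_fun_mult_ident: "smooth_fun f \<Longrightarrow> smooth_fun (\<lambda>x. x * f x)"
  using smooth_fun_add_mult_ident[OF smooth_fun_const, of f 0] by simp

lemma smooth_fun_mult_quadratic:
  assumes "smooth_fun f"
  shows "smooth_fun (\<lambda>x. (p + q * x + r * x\<^sup>2) * f x)"
proof -
  have "smooth_fun (\<lambda>x. p * f x + (q * (x * f x) + r * (x * (x * f x))))"
    using assms by (intro smooth_fun_add smooth_fun_cmult smooth_fun_mult_ident)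
  then show ?thesis
    by (simp add: algebra_simps power2_eq_square)
qed

lemma smooth_fun_mult_linear: "smooth_fun f \<Longrightarrow> smooth_fun (\<lambda>x. (p + q * x) * f x)"
  using smooth_fun_mult_quadratic[of f p q 0] by simp

definition a13_comb :: "real \<Rightarrow> real \<Rightarrow> real \<Rightarrow> real \<Rightarrow> real \<Rightarrow> real \<Rightarrow> (real \<Rightarrow> real) \<Rightarrow> (real \<Rightarrow> real) \<Rightarrow> vf" where
  "a13_comb a b c d e h \<alpha> \<sigma> = (\<lambda>(z1, z2, w). (a + b * z1 + c * z1\<^sup>2, e + h * z1 + d * z2 + c * z1 * z2,
      (3 * d - b) * w + c * (z1 * w + z2 ^ 3 / 6) + h * z2\<^sup>2 / 2 + \<alpha> z1 * z2 + \<sigma> z1))"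

lemma a13_comb_generators:
  "P1 = a13_comb 1 0 0 0 0 0 (\<lambda>x. 0) (\<lambda>x. 0)" "D1 = a13_comb 0 1 0 0 0 0 (\<lambda>x. 0) (\<lambda>x. 0)"
  "K = a13_comb 0 0 1 0 0 0 (\<lambda>x. 0) (\<lambda>x. 0)" "D2 = a13_comb 0 0 0 1 0 0 (\<lambda>x. 0) (\<lambda>x. 0)"
  "P2 = a13_comb 0 0 0 0 1 0 (\<lambda>x. 0) (\<lambda>x. 0)" "H = a13_comb 0 0 0 0 0 1 (\<lambda>x. 0) (\<lambda>x. 0)"
  "R \<alpha> = a13_comb 0 0 0 0 0 0 \<alpha> (\<lambda>x. 0)" "Z \<sigma> = a13_comb 0 0 0 0 0 0 (\<lambda>x. 0) \<sigma>"
  by (auto simp: fun_eq_iff a13_comb_def P1_def D1_def K_def D2_def P2_def H_def R_def Z_def)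

lemma a13_comb_eq_sum: "a13_comb a b c d e h \<alpha> \<sigma> = (\<lambda>p. a *\<^sub>R P1 p + (b *\<^sub>R D1 p + (c *\<^sub>R K p
    + (d *\<^sub>R D2 p + (e *\<^sub>R P2 p + (h *\<^sub>R H p + (R \<alpha> p + Z \<sigma> p)))))))"
  unfolding a13_comb_generators by (auto simp: fun_eq_iff a13_comb_def algebra_simps)

lemma a13_comb_add: "(\<lambda>p. a13_comb a b c d e h \<alpha> \<sigma> p + a13_comb a' b' c' d' e' h' \<beta> \<tau> p) =
    a13_comb (a + a') (b + b') (c + c') (d + d') (e + e') (h + h') (\<lambda>x. \<alpha> x + \<beta> x) (\<lambda>x. \<sigma> x + \<tau> x)"
  by (auto simp: fun_eq_iff a13_comb_def field_simps)

lemma a13_comb_scaleR: "(\<lambda>p. k *\<^sub>R a13_comb a b c d e h \<alpha> \<sigma> p) =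
    a13_comb (k * a) (k * b) (k * c) (k * d) (k * e) (k * h) (\<lambda>x. k * \<alpha> x) (\<lambda>x. k * \<sigma> x)"
  by (auto simp: fun_eq_iff a13_comb_def algebra_simps)

lemma a13_comb_zero: "a13_comb 0 0 0 0 0 0 (\<lambda>x. 0) (\<lambda>x. 0) = (\<lambda>p. 0)"
  by (auto simp: fun_eq_iff a13_comb_def zero_prod_def)

lemma frechet_derivative_a13_comb:
  assumes "\<And>x. \<alpha> differentiable at x" "\<And>x. \<sigma> differentiable at x"
  shows "frechet_derivative (a13_comb a b c d e h \<alpha> \<sigma>) (at (x, y, z)) = (\<lambda>(v1, v2, v3). (b * v1 + 2 * c * x * v1,
      h * v1 + d * v2 + c * (v1 * y + x * v2),
      (3 * d - b) * v3 + c * (v1 * z + x * v3 + y\<^sup>2 / 2 * v2) + h * y * v2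
        + deriv \<alpha> x * v1 * y + \<alpha> x * v2 + deriv \<sigma> x * v1))"
proof -
  have \<alpha>: "(\<alpha> has_real_derivative deriv \<alpha> t) (at t)" for t
    using assms(1) DERIV_deriv_iff_real_differentiable by blast
  have \<sigma>: "(\<sigma> has_real_derivative deriv \<sigma> t) (at t)" for t
    using assms(2) DERIV_deriv_iff_real_differentiable by blast
  have "a13_comb a b c d e h \<alpha> \<sigma> = (\<lambda>q. (a + b * fst q + c * (fst q)\<^sup>2,
      e + h * fst q + d * fst (snd q) + c * fst q * fst (snd q),
      (3 * d - b) * snd (snd q) + c * (fst q * snd (snd q) + fst (snd q) ^ 3 / 6)
        + h * (fst (snd q))\<^sup>2 / 2 + \<alpha> (fst q) * fst (snd q) + \<sigma> (fst q)))"
    by (auto simp: a13_comb_def)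
  then have "(a13_comb a b c d e h \<alpha> \<sigma> has_derivative (\<lambda>(v1, v2, v3). (b * v1 + 2 * c * x * v1,
      h * v1 + d * v2 + c * (v1 * y + x * v2),
      (3 * d - b) * v3 + c * (v1 * z + x * v3 + y\<^sup>2 / 2 * v2) + h * y * v2
        + deriv \<alpha> x * v1 * y + \<alpha> x * v2 + deriv \<sigma> x * v1))) (at (x, y, z))"
    apply (simp only:)
    apply (rule derivative_eq_intros DERIV_compose_FDERIV[OF \<alpha>] DERIV_compose_FDERIV[OF \<sigma>] | simp)+
    apply (auto simp: fun_eq_iff algebra_simps power2_eq_square)
    done
  then show ?thesis
    by (rule frechet_derivative_at[symmetric])
qed

lemma vf_bracket_a13_comb:
  assumes "\<And>x. \<alpha> differentiable at x" "\<And>x. \<sigma> differentiable at x"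
    and "\<And>x. \<beta> differentiable at x" "\<And>x. \<tau> differentiable at x"
  shows "vf_bracket (a13_comb a b c d e h \<alpha> \<sigma>) (a13_comb a' b' c' d' e' h' \<beta> \<tau>) =
    a13_comb (a * b' - b * a') (2 * (a * c' - c * a')) (b * c' - c * b') (a * c' - c * a')
      (a * h' - h * a' + e * d' - d * e') (h * d' - h * b' + e * c' - d * h' - c * e' + b * h')
      (\<lambda>x. (a + b * x + c * x\<^sup>2) * deriv \<beta> x - (a' + b' * x + c' * x\<^sup>2) * deriv \<alpha> x
        + (2 * d' - b') * \<alpha> x - (2 * d - b) * \<beta> x + (e * h' - h * e'))
      (\<lambda>x. (a + b * x + c * x\<^sup>2) * deriv \<tau> x - (a' + b' * x + c' * x\<^sup>2) * deriv \<sigma> x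
        + (3 * d' - b' + c' * x) * \<sigma> x - (3 * d - b + c * x) * \<tau> x
        + (e + h * x) * \<beta> x - (e' + h' * x) * \<alpha> x)"
proof (rule ext)
  fix p :: "real \<times> real \<times> real"
  obtain x y z where p: "p = (x, y, z)"
    by (cases p) auto
  show "vf_bracket (a13_comb a b c d e h \<alpha> \<sigma>) (a13_comb a' b' c' d' e' h' \<beta> \<tau>) p = a13_comb (a * b' - b * a') (2 * (a * c' - c * a')) (b * c' - c * b') (a * c' - c * a')
      (a * h' - h * a' + e * d' - d * e') (h * d' - h * b' + e * c' - d * h' - c * e' + b * h')
      (\<lambda>x. (a + b * x + c * x\<^sup>2) * deriv \<beta> x - (a' + b' * x + c' * x\<^sup>2) * deriv \<alpha> x
        + (2 * d' - b') * \<alpha> x - (2 * d - b) * \<beta> x + (e * h' - h * e'))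
      (\<lambda>x. (a + b * x + c * x\<^sup>2) * deriv \<tau> x - (a' + b' * x + c' * x\<^sup>2) * deriv \<sigma> x
        + (3 * d' - b' + c' * x) * \<sigma> x - (3 * d - b + c * x) * \<tau> x
        + (e + h * x) * \<beta> x - (e' + h' * x) * \<alpha> x) p"
    unfolding vf_bracket_def p
    by (simp add: frechet_derivative_a13_comb assms)
      (simp add: a13_comb_def field_simps power2_eq_square power3_eq_cube)
qed

lemma vf_subspace_0: "vf_subspace I \<Longrightarrow> (\<lambda>p. 0) \<in> I"
  unfolding vf_subspace_def by blast

lemma vf_subspace_add: "vf_subspace I \<Longrightarrow> x \<in> I \<Longrightarrow> y \<in> I \<Longrightarrow> (\<lambda>p. x p + y p) \<in> I"
  unfolding vf_subspace_def by blast

lemma vf_subspace_scale: "vf_subspace I \<Longrightarrow> x \<in> I \<Longrightarrow> (\<lambda>p. k *\<^sub>R x p) \<in> I"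
  unfolding vf_subspace_def by blast

lemma vf_subspace_scale_add:
  "vf_subspace I \<Longrightarrow> x \<in> I \<Longrightarrow> y \<in> I \<Longrightarrow> (\<lambda>p. k *\<^sub>R x p + y p) \<in> I"
  using vf_subspace_add[of I "\<lambda>p. k *\<^sub>R x p" y] vf_subspace_scale[of I x k] by blast

lemma vf_span_superset: "x \<in> S \<Longrightarrow> x \<in> vf_span S"
  unfolding vf_span_def by (intro CollectI exI[of _ "{x}"] exI[of _ "\<lambda>_. 1"]) auto

lemma vf_span_minimal:
  assumes T: "vf_subspace T" and "S \<subseteq> T"
  shows "vf_span S \<subseteq> T"
proof
  fix f
  assume "f \<in> vf_span S"
  then obtain F c where F: "finite F" "F \<subseteq> S" and f: "f = (\<lambda>p. \<Sum>v\<in>F. c v *\<^sub>R v p)"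
    unfolding vf_span_def by blast
  from F have "(\<lambda>p. \<Sum>v\<in>F. c v *\<^sub>R v p) \<in> T"
  proof (induction F rule: finite_induct)
    case empty
    then show ?case using vf_subspace_0[OF T] by simp
  next
    case (insert x F)
    then have "(\<lambda>p. c x *\<^sub>R x p + (\<Sum>v\<in>F. c v *\<^sub>R v p)) \<in> T"
      using \<open>S \<subseteq> T\<close> by (intro vf_subspace_scale_add[OF T]) auto
    then show ?case using insert by simp
  qed
  then show "f \<in> T" unfolding f .
qed

lemma vf_subspace_vf_span: "vf_subspace (vf_span S)"
  unfolding vf_subspace_def
proof (intro conjI ballI allI)
  show "(\<lambda>p. 0) \<in> vf_span S"
    unfolding vf_span_def by (intro CollectI exI[of _ "{}"]) auto
next
  fix x y
  assume "x \<in> vf_span S" "y \<in> vf_span S"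
  then obtain F1 c1 F2 c2 where F: "finite F1" "F1 \<subseteq> S" "finite F2" "F2 \<subseteq> S"
    and x: "x = (\<lambda>p. \<Sum>v\<in>F1. c1 v *\<^sub>R v p)" and y: "y = (\<lambda>p. \<Sum>v\<in>F2. c2 v *\<^sub>R v p)"
    unfolding vf_span_def by blast
  define c where "c v = (if v \<in> F1 then c1 v else 0) + (if v \<in> F2 then c2 v else 0)" for v
  have "x p + y p = (\<Sum>v\<in>F1 \<union> F2. c v *\<^sub>R v p)" for p
  proof -
    have "(\<Sum>v\<in>F1 \<union> F2. c v *\<^sub>R v p) = (\<Sum>v\<in>F1 \<union> F2. if v \<in> F1 then c1 v *\<^sub>R v p else 0)
        + (\<Sum>v\<in>F1 \<union> F2. if v \<in> F2 then c2 v *\<^sub>R v p else 0)"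
      unfolding sum.distrib[symmetric] by (rule sum.cong) (auto simp: c_def scaleR_add_left)
    also have "\<dots> = (\<Sum>v\<in>F1. c1 v *\<^sub>R v p) + (\<Sum>v\<in>F2. c2 v *\<^sub>R v p)"
      using F by (simp add: sum.If_cases Int_absorb1 Int_absorb2)
    finally show ?thesis unfolding x y by simp
  qed
  then show "(\<lambda>p. x p + y p) \<in> vf_span S"
    unfolding vf_span_def using F by (intro CollectI exI[of _ "F1 \<union> F2"] exI[of _ c]) auto
next
  fix k x
  assume "x \<in> vf_span S"
  then obtain F c where F: "finite F" "F \<subseteq> S" and x: "x = (\<lambda>p. \<Sum>v\<in>F. c v *\<^sub>R v p)"
    unfolding vf_span_def by blast
  have "(\<lambda>p. k *\<^sub>R x p) = (\<lambda>p. \<Sum>v\<in>F. (k * c v) *\<^sub>R v p)"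
    unfolding x by (simp add: scaleR_sum_right)
  then show "(\<lambda>p. k *\<^sub>R x p) \<in> vf_span S"
    unfolding vf_span_def using F by (intro CollectI exI[of _ F] exI[of _ "\<lambda>v. k * c v"]) auto
qed

definition a13_combs :: "(real \<Rightarrow> real \<Rightarrow> real \<Rightarrow> real \<Rightarrow> real \<Rightarrow> real \<Rightarrow> bool) \<Rightarrow> vf set" where
  "a13_combs P = {a13_comb a b c d e h \<alpha> \<sigma> | a b c d e h \<alpha> \<sigma>.
     P a b c d e h \<and> smooth_fun \<alpha> \<and> smooth_fun \<sigma>}"

lemma a13_combsI:
  "P a b c d e h \<Longrightarrow> smooth_fun \<alpha> \<Longrightarrow> smooth_fun \<sigma> \<Longrightarrow> a13_comb a b c d e h \<alpha> \<sigma> \<in> a13_combs P"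
  unfolding a13_combs_def by blast

lemma a13_combsE:
  assumes "x \<in> a13_combs P"
  obtains a b c d e h \<alpha> \<sigma> where "x = a13_comb a b c d e h \<alpha> \<sigma>" "P a b c d e h"
    "smooth_fun \<alpha>" "smooth_fun \<sigma>"
  using assms unfolding a13_combs_def by blast

lemma vf_subspace_a13_combs:
  assumes "P 0 0 0 0 0 0"
    and "\<And>a b c d e h a' b' c' d' e' h'. P a b c d e h \<Longrightarrow> P a' b' c' d' e' h' \<Longrightarrow>
      P (a + a') (b + b') (c + c') (d + d') (e + e') (h + h')"
    and "\<And>k a b c d e h. P a b c d e h \<Longrightarrow> P (k * a) (k * b) (k * c) (k * d) (k * e) (k * h)"
  shows "vf_subspace (a13_combs P)"
  unfolding vf_subspace_def
proof (intro conjI ballI allI)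
  show "(\<lambda>p. 0) \<in> a13_combs P"
    using a13_combsI[of P, OF assms(1) smooth_fun_const[of 0] smooth_fun_const[of 0]]
    by (simp only: a13_comb_zero)
next
  fix x y
  assume "x \<in> a13_combs P" "y \<in> a13_combs P"
  then show "(\<lambda>p. x p + y p) \<in> a13_combs P"
    by (elim a13_combsE) (simp only: a13_comb_add, intro a13_combsI assms(2) smooth_fun_add)
next
  fix k x
  assume "x \<in> a13_combs P"
  then show "(\<lambda>p. k *\<^sub>R x p) \<in> a13_combs P"
    by (elim a13_combsE) (simp only: a13_comb_scaleR, intro a13_combsI assms(3) smooth_fun_cmult)
qed

lemma a13_eq_a13_combs: "a13 = a13_combs (\<lambda>a b c d e h. True)"
proof
  show "a13 \<subseteq> a13_combs (\<lambda>a b c d e h. True)"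
    unfolding a13_def
    by (rule vf_span_minimal[OF vf_subspace_a13_combs])
      (auto simp: a13_comb_generators intro!: a13_combsI smooth_fun_const)
  show "a13_combs (\<lambda>a b c d e h. True) \<subseteq> a13"
  proof
    fix x
    assume "x \<in> a13_combs (\<lambda>a b c d e h. True)"
    then obtain a b c d e h \<alpha> \<sigma> where x: "x = a13_comb a b c d e h \<alpha> \<sigma>" "smooth_fun \<alpha>" "smooth_fun \<sigma>"
      by (elim a13_combsE) blast
    show "x \<in> a13"
      unfolding x(1) a13_comb_eq_sum a13_def
      by (intro vf_subspace_scale_add[OF vf_subspace_vf_span] vf_subspace_add[OF vf_subspace_vf_span]
          vf_span_superset) (use x in auto)
  qed
qed

lemma r13_eq_a13_combs: "r13 = a13_combs (\<lambda>a b c d e h. a = 0 \<and> b = 0 \<and> c = 0)"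
proof
  show "r13 \<subseteq> a13_combs (\<lambda>a b c d e h. a = 0 \<and> b = 0 \<and> c = 0)"
    unfolding r13_def
    by (rule vf_span_minimal[OF vf_subspace_a13_combs])
      (auto simp: a13_comb_generators intro!: a13_combsI smooth_fun_const)
  show "a13_combs (\<lambda>a b c d e h. a = 0 \<and> b = 0 \<and> c = 0) \<subseteq> r13"
  proof
    fix x
    assume "x \<in> a13_combs (\<lambda>a b c d e h. a = 0 \<and> b = 0 \<and> c = 0)"
    then obtain d e h \<alpha> \<sigma> where x: "x = a13_comb 0 0 0 d e h \<alpha> \<sigma>" "smooth_fun \<alpha>" "smooth_fun \<sigma>"
      by (elim a13_combsE) blast
    have "x = (\<lambda>p. d *\<^sub>R D2 p + (e *\<^sub>R P2 p + (h *\<^sub>R H p + (R \<alpha> p + Z \<sigma> p))))"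
      unfolding x(1) a13_comb_eq_sum by simp
    also have "\<dots> \<in> r13"
      unfolding r13_def
      by (intro vf_subspace_scale_add[OF vf_subspace_vf_span] vf_subspace_add[OF vf_subspace_vf_span]
          vf_span_superset) (use x in auto)
    finally show "x \<in> r13" .
  qed
qed

lemma vf_bracket_a13_comb_smooth:
  assumes "smooth_fun \<alpha>" "smooth_fun \<sigma>" "smooth_fun \<beta>" "smooth_fun \<tau>"
  obtains \<alpha>' \<sigma>' where "smooth_fun \<alpha>'" "smooth_fun \<sigma>'"
    "vf_bracket (a13_comb a b c d e h \<alpha> \<sigma>) (a13_comb a' b' c' d' e' h' \<beta> \<tau>) =
      a13_comb (a * b' - b * a') (2 * (a * c' - c * a')) (b * c' - c * b') (a * c' - c * a')
        (a * h' - h * a' + e * d' - d * e') (h * d' - h * b' + e * c' - d * h' - c * e' + b * h')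
        \<alpha>' \<sigma>'"
proof -
  have \<alpha>': "smooth_fun (\<lambda>x. (a + b * x + c * x\<^sup>2) * deriv \<beta> x - (a' + b' * x + c' * x\<^sup>2) * deriv \<alpha> x
      + (2 * d' - b') * \<alpha> x - (2 * d - b) * \<beta> x + (e * h' - h * e'))"
    using assms by (intro smooth_fun_add smooth_fun_diff smooth_fun_mult_quadratic smooth_fun_cmult
        smooth_fun_const smooth_fun_deriv)
  have \<sigma>': "smooth_fun (\<lambda>x. (a + b * x + c * x\<^sup>2) * deriv \<tau> x - (a' + b' * x + c' * x\<^sup>2) * deriv \<sigma> x
      + (3 * d' - b' + c' * x) * \<sigma> x - (3 * d - b + c * x) * \<tau> x
      + (e + h * x) * \<beta> x - (e' + h' * x) * \<alpha> x)"
    using assms by (intro smooth_fun_add smooth_fun_diff smooth_fun_mult_quadratic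
        smooth_fun_mult_linear smooth_fun_deriv)
  show thesis
    by (rule that[OF \<alpha>' \<sigma>' vf_bracket_a13_comb]) (use assms smooth_fun_differentiable in blast)+
qed

lemma vf_bracket_a13_combs:
  assumes "x \<in> a13_combs P" "y \<in> a13_combs Q"
    and "\<And>a b c d e h a' b' c' d' e' h'. P a b c d e h \<Longrightarrow> Q a' b' c' d' e' h' \<Longrightarrow>
      S (a * b' - b * a') (2 * (a * c' - c * a')) (b * c' - c * b') (a * c' - c * a')
        (a * h' - h * a' + e * d' - d * e') (h * d' - h * b' + e * c' - d * h' - c * e' + b * h')"
  shows "vf_bracket x y \<in> a13_combs S"
proof -
  obtain a b c d e h \<alpha> \<sigma> where x: "x = a13_comb a b c d e h \<alpha> \<sigma>" "P a b c d e h"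
    "smooth_fun \<alpha>" "smooth_fun \<sigma>"
    using assms(1) by (rule a13_combsE)
  obtain a' b' c' d' e' h' \<beta> \<tau> where y: "y = a13_comb a' b' c' d' e' h' \<beta> \<tau>" "Q a' b' c' d' e' h'"
    "smooth_fun \<beta>" "smooth_fun \<tau>"
    using assms(2) by (rule a13_combsE)
  obtain \<alpha>' \<sigma>' where "smooth_fun \<alpha>'" "smooth_fun \<sigma>'"
    "vf_bracket x y = a13_comb (a * b' - b * a') (2 * (a * c' - c * a')) (b * c' - c * b') (a * c' - c * a')
        (a * h' - h * a' + e * d' - d * e') (h * d' - h * b' + e * c' - d * h' - c * e' + b * h') \<alpha>' \<sigma>'"
    unfolding x(1) y(1) using x(3,4) y(3,4) by (rule vf_bracket_a13_comb_smooth)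
  then show ?thesis
    using assms(3)[OF x(2) y(2)] by (simp add: a13_combsI)
qed

lemma lie_ideal_r13: "lie_ideal a13 r13"
  unfolding lie_ideal_def a13_eq_a13_combs r13_eq_a13_combs
proof (intro conjI ballI)
  show "a13_combs (\<lambda>a b c d e h. a = 0 \<and> b = 0 \<and> c = 0) \<subseteq> a13_combs (\<lambda>a b c d e h. True)"
    by (auto elim!: a13_combsE intro!: a13_combsI)
  show "vf_subspace (a13_combs (\<lambda>a b c d e h. a = 0 \<and> b = 0 \<and> c = 0))"
    by (rule vf_subspace_a13_combs) auto
  show "vf_bracket x y \<in> a13_combs (\<lambda>a b c d e h. a = 0 \<and> b = 0 \<and> c = 0)"
    if "x \<in> a13_combs (\<lambda>a b c d e h. True)" "y \<in> a13_combs (\<lambda>a b c d e h. a = 0 \<and> b = 0 \<and> c = 0)"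
    for x y
    using that by (rule vf_bracket_a13_combs) simp
qed

lemma vf_subspace_derived: "vf_subspace I \<Longrightarrow> vf_subspace (derived I k)"
  by (cases k) (auto intro: vf_subspace_vf_span)

lemma vf_bracket_in_derived_Suc:
  "x \<in> derived I k \<Longrightarrow> y \<in> derived I k \<Longrightarrow> vf_bracket x y \<in> derived I (Suc k)"
  by (auto intro!: vf_span_superset)

lemma derived_Suc_subset:
  assumes "vf_subspace T" "derived I k \<subseteq> A" "\<And>x y. x \<in> A \<Longrightarrow> y \<in> A \<Longrightarrow> vf_bracket x y \<in> T"
  shows "derived I (Suc k) \<subseteq> T"
  unfolding derived.simps using assms by (intro vf_span_minimal) auto

lemma solvable_r13: "solvable r13"
proof -
  let ?T1 = "a13_combs (\<lambda>a b c d e h. a = 0 \<and> b = 0 \<and> c = 0 \<and> d = 0)"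
  let ?T2 = "a13_combs (\<lambda>a b c d e h. a = 0 \<and> b = 0 \<and> c = 0 \<and> d = 0 \<and> e = 0 \<and> h = 0)"
  have "derived r13 (Suc 0) \<subseteq> ?T1"
    by (rule derived_Suc_subset)
      (auto intro: vf_subspace_a13_combs vf_bracket_a13_combs simp: r13_eq_a13_combs)
  then have T2: "derived r13 (Suc (Suc 0)) \<subseteq> ?T2"
    by (rule derived_Suc_subset[rotated])
      (auto intro: vf_subspace_a13_combs vf_bracket_a13_combs)
  have abelian: "vf_bracket x y \<in> {\<lambda>p. 0}" if "x \<in> ?T2" "y \<in> ?T2" for x y
    using that
    by (elim a13_combsE) (simp add: vf_bracket_a13_comb smooth_fun_differentiable a13_comb_zero)
  have "vf_subspace {\<lambda>p. 0}"
    by (simp add: vf_subspace_def)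
  then have "derived r13 (Suc (Suc (Suc 0))) \<subseteq> {\<lambda>p. 0}"
    using T2 abelian by (rule derived_Suc_subset)
  moreover have "(\<lambda>p. 0) \<in> derived r13 (Suc (Suc (Suc 0)))"
    by (intro vf_subspace_0 vf_subspace_derived) (simp add: r13_def vf_subspace_vf_span)
  ultimately show ?thesis
    unfolding solvable_def by blast
qed

text \<open>The image of I in a13 / r13, which is identified with sl2 through the coordinates of
  P1, D1, K; sl2_bracket is the induced bracket.\<close>
definition sl2_part :: "vf set \<Rightarrow> (real \<times> real \<times> real) set" where
  "sl2_part I = {(a, b, c) | a b c d e h \<alpha> \<sigma>.
     smooth_fun \<alpha> \<and> smooth_fun \<sigma> \<and> a13_comb a b c d e h \<alpha> \<sigma> \<in> I}"

fun sl2_bracket :: "real \<times> real \<times> real \<Rightarrow> real \<times> real \<times> real \<Rightarrow> real \<times> real \<times> real" where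
  "sl2_bracket (a, b, c) (a', b', c') = (a * b' - b * a', 2 * (a * c' - c * a'), b * c' - c * b')"

lemma sl2_part_bracket:
  assumes "u \<in> sl2_part A" "v \<in> sl2_part B" "\<And>x y. x \<in> A \<Longrightarrow> y \<in> B \<Longrightarrow> vf_bracket x y \<in> C"
  shows "sl2_bracket u v \<in> sl2_part C"
proof -
  obtain a b c d e h \<alpha> \<sigma> where u: "u = (a, b, c)" "smooth_fun \<alpha>" "smooth_fun \<sigma>"
    "a13_comb a b c d e h \<alpha> \<sigma> \<in> A"
    using assms(1) unfolding sl2_part_def by blast
  obtain a' b' c' d' e' h' \<beta> \<tau> where v: "v = (a', b', c')" "smooth_fun \<beta>" "smooth_fun \<tau>"
    "a13_comb a' b' c' d' e' h' \<beta> \<tau> \<in> B"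
    using assms(2) unfolding sl2_part_def by blast
  obtain \<alpha>' \<sigma>' where "smooth_fun \<alpha>'" "smooth_fun \<sigma>'"
    "vf_bracket (a13_comb a b c d e h \<alpha> \<sigma>) (a13_comb a' b' c' d' e' h' \<beta> \<tau>) =
      a13_comb (a * b' - b * a') (2 * (a * c' - c * a')) (b * c' - c * b') (a * c' - c * a')
        (a * h' - h * a' + e * d' - d * e') (h * d' - h * b' + e * c' - d * h' - c * e' + b * h')
        \<alpha>' \<sigma>'"
    using u(2,3) v(2,3) by (rule vf_bracket_a13_comb_smooth)
  with assms(3)[OF u(4) v(4)] show ?thesis
    unfolding sl2_part_def u(1) v(1) by fastforce
qed

lemma sl2_part_scaleR_cancel:
  assumes I: "vf_subspace I" and u: "k *\<^sub>R u \<in> sl2_part I" and "k \<noteq> 0"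
  shows "u \<in> sl2_part I"
proof -
  obtain a b c d e h \<alpha> \<sigma> where abc: "k *\<^sub>R u = (a, b, c)" and smooth: "smooth_fun \<alpha>" "smooth_fun \<sigma>"
    and mem: "a13_comb a b c d e h \<alpha> \<sigma> \<in> I"
    using u unfolding sl2_part_def by blast
  have "(\<lambda>p. (1 / k) *\<^sub>R a13_comb a b c d e h \<alpha> \<sigma> p) \<in> I"
    using I mem by (rule vf_subspace_scale)
  moreover have "u = (1 / k * a, 1 / k * b, 1 / k * c)"
    using arg_cong[OF abc, of "scaleR (1 / k)"] \<open>k \<noteq> 0\<close> by simp
  ultimately show ?thesis
    unfolding sl2_part_def a13_comb_scaleR using smooth smooth_fun_cmult by blast
qed

lemma sl2_part_a13: "u \<in> sl2_part a13"
proof -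
  obtain a b c where "u = (a, b, c)"
    by (cases u) auto
  then show ?thesis
    unfolding sl2_part_def a13_eq_a13_combs
    by (blast intro: a13_combsI smooth_fun_const)
qed

lemma lie_ideal_sl2_part_basis:
  assumes J: "lie_ideal a13 J" and u: "u \<in> sl2_part J" "u \<noteq> 0"
  shows "(1, 0, 0) \<in> sl2_part J" "(0, 1, 0) \<in> sl2_part J" "(0, 0, 1) \<in> sl2_part J"
proof -
  have sub: "vf_subspace J" and br: "\<And>x y. x \<in> a13 \<Longrightarrow> y \<in> J \<Longrightarrow> vf_bracket x y \<in> J"
    using J unfolding lie_ideal_def by auto
  have ad: "sl2_bracket w v \<in> sl2_part J" if "v \<in> sl2_part J" for w v
    using sl2_part_a13 that br by (rule sl2_part_bracket)
  obtain a b c where abc: "u = (a, b, c)"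
    by (cases u) auto
  have u1: "(b, 2 * c, 0) \<in> sl2_part J"
    using ad[OF u(1), of "(1, 0, 0)"] by (simp add: abc)
  have u2: "(2 * c, 0, 0) \<in> sl2_part J"
    using ad[OF u1, of "(1, 0, 0)"] by simp
  show e1: "(1, 0, 0) \<in> sl2_part J"
  proof (cases "c = 0")
    case False
    then show ?thesis using sl2_part_scaleR_cancel[OF sub, of "2 * c"] u2 by simp
  next
    case c: True
    show ?thesis
    proof (cases "b = 0")
      case False
      then show ?thesis using sl2_part_scaleR_cancel[OF sub, of b] u1 c by simp
    next
      case True
      then have "a \<noteq> 0" using u(2) abc c by (simp add: zero_prod_def)
      then show ?thesis using sl2_part_scaleR_cancel[OF sub, of a] u(1) abc c True by simp
    qed
  qed
  show e2: "(0, 1, 0) \<in> sl2_part J"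
    using sl2_part_scaleR_cancel[OF sub, of "-2"] ad[OF e1, of "(0, 0, 1)"] by simp
  show "(0, 0, 1) \<in> sl2_part J"
    using sl2_part_scaleR_cancel[OF sub, of "-1"] ad[OF e2, of "(0, 0, 1)"] by simp
qed

lemma sl2_part_derived_basis:
  assumes sub: "vf_subspace J"
    and "(1, 0, 0) \<in> sl2_part J" "(0, 1, 0) \<in> sl2_part J" "(0, 0, 1) \<in> sl2_part J"
  shows "(1, 0, 0) \<in> sl2_part (derived J k) \<and> (0, 1, 0) \<in> sl2_part (derived J k)
    \<and> (0, 0, 1) \<in> sl2_part (derived J k)"
proof (induction k)
  case 0
  then show ?case using assms by simp
next
  case (Suc k)
  have br: "sl2_bracket v w \<in> sl2_part (derived J (Suc k))"
    if "v \<in> sl2_part (derived J k)" "w \<in> sl2_part (derived J k)" for v w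
    using that vf_bracket_in_derived_Suc by (rule sl2_part_bracket)
  have "2 *\<^sub>R (0, 1, 0) \<in> sl2_part (derived J (Suc k))"
    using br[of "(1, 0, 0)" "(0, 0, 1)"] Suc by simp
  then have "(0, 1, 0) \<in> sl2_part (derived J (Suc k))"
    by (rule sl2_part_scaleR_cancel[OF vf_subspace_derived[OF sub]]) simp
  then show ?case
    using br[of "(1, 0, 0)" "(0, 1, 0)"] br[of "(0, 1, 0)" "(0, 0, 1)"] Suc by simp
qed

lemma not_solvable_if_sl2_part_nonzero:
  assumes "lie_ideal a13 J" "u \<in> sl2_part J" "u \<noteq> 0"
  shows "\<not> solvable J"
proof
  assume "solvable J"
  then obtain k where k: "derived J k = {\<lambda>p. 0}"
    unfolding solvable_def by blast
  have "vf_subspace J"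
    using assms(1) unfolding lie_ideal_def by blast
  then have "(1, 0, 0) \<in> sl2_part (derived J k)"
    using sl2_part_derived_basis lie_ideal_sl2_part_basis[OF assms] by blast
  then obtain d e h \<alpha> \<sigma> where "a13_comb 1 0 0 d e h \<alpha> \<sigma> = (\<lambda>p. 0)"
    unfolding sl2_part_def k by blast
  then have "a13_comb 1 0 0 d e h \<alpha> \<sigma> (0, 0, 0) = 0"
    by simp
  then show False
    by (simp add: a13_comb_def zero_prod_def)
qed

lemma subset_r13_if_sl2_part_trivial:
  assumes "I \<subseteq> a13" "sl2_part I \<subseteq> {0}"
  shows "I \<subseteq> r13"
proof
  fix x
  assume x: "x \<in> I"
  then have "x \<in> a13_combs (\<lambda>a b c d e h. True)"
    using assms(1) a13_eq_a13_combs by blast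
  then obtain a b c d e h \<alpha> \<sigma> where x_eq: "x = a13_comb a b c d e h \<alpha> \<sigma>"
    and smooth: "smooth_fun \<alpha>" "smooth_fun \<sigma>"
    by (elim a13_combsE)
  have "(a, b, c) \<in> sl2_part I"
    unfolding sl2_part_def using x x_eq smooth by blast
  then have "a = 0" "b = 0" "c = 0"
    using assms(2) by (auto simp: zero_prod_def)
  then show "x \<in> r13"
    unfolding x_eq r13_eq_a13_combs using smooth by (simp add: a13_combsI)
qed

theorem lemma1:
  shows "is_radical a13 r13"
proof -
  have "J \<subseteq> r13" if "solvable_ideal a13 J" for J
  proof -
    have J: "lie_ideal a13 J" "solvable J"
      using that unfolding solvable_ideal_def by auto
    then have "sl2_part J \<subseteq> {0}"
      using not_solvable_if_sl2_part_nonzero by blast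
    moreover have "J \<subseteq> a13"
      using J unfolding lie_ideal_def by blast
    ultimately show ?thesis
      by (rule subset_r13_if_sl2_part_trivial[rotated])
  qed
  then show ?thesis
    unfolding is_radical_def solvable_ideal_def using lie_ideal_r13 solvable_r13 by blast
qed

end
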